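(* Fix an income $y>0$ and prices $0\le p_1'<p_1''\le y$, and consider an increase in the price of good 1 from $p_1'$ to $p_1''$. Suppose Assumptions 1 (with $U_0$ strictly increasing), 2, 3 and 4 hold. Let $\overline{p_1}$ be the minimum price $p_1\in[0,y]$ with $q_1(p_1,y)=0$. Then the equivalent variation $S^{EV}$ across the population has distribution $\Pr\{S^{EV}=0\}=1-q_1(p_1',y)$, $\Pr\{S^{EV}=\overline{p_1}-p_1'\}=q_1(p_1',y)-q_1(p_1'',y)$, $\Pr\{S^{EV}=p_1''-p_1'\}=q_1(p_1'',y)$. If instead Assumption 3 does not hold (Assumptions 1 with $U_0$ strictly increasing, 2 and 4 hold), then the consumers who switch from good 1 at price $p_1'$ to good 0 at price $p_1''$ (a proportion $q_1(p_1',y)-q_1(p_1'',y)$ of the population) have equivalent variation satisfying $y-p_1'\ge S^{EV}\ge \overline{p_1}-p_1'$.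
   Context: Two goods, $0$ (price $0$) and $1$ (price $p_1\ge0$). All consumers have common income $y>0$, choose one good and spend the remainder on a numeraire. All consumers share utility functions $U_0:(0,\infty)\to[0,\infty)$ (utility of good 0 with numeraire amount $z$) and $U_1:[0,\infty)\to[0,\infty)$ (utility of good 1 with residual numeraire $z$). Each consumer $i$ has an attention-price threshold $t_i\in(0,\infty]$; $G$ is the CDF of thresholds in the population. Consumer $i$ considers good 1 at price $p_1$ iff $p_1<t_i$ (good 0 is always considered), and chooses good 1 iff she considers it and $U_0(y)<U_1(y-p_1)$. Hence the observed choice probability is $q_{1}(p_{1},y)=\mathbb{1}\{U_{0}(y)<U_{1}(y-p_{1})\}\,(1-G(p_{1}))$. Assumption 1: (i) $U_0$ is (here strictly) increasing, $U_1$ is continuous and strictly increasing; (ii) for every $y>0$ there is $\bar p_1\in[0,y]$ with $U_0(y)\ge U_1(y-\bar p_1)$. Assumption 2: $G(0)=0$. Assumption 3: $G(t)<1$ for all finite $t$ (a positive mass of consumers pays attention at every price). Assumption 4: $q_1(p_1,y)$ is observed for all $p_1\in[p_1',y]$. Equivalent variation of consumer $i$ for the price increase from $p_1'$ to $p_1''$: if $p_1''<t_i$ (full attention), $S^{EV}$ is the solution $S$ of $\max\{U_0(y-S),U_1(y-S-p_1')\}=\max\{U_0(y),U_1(y-p_1'')\}$; if $p_1'<t_i\le p_1''$ (partial attention), it solves $\max\{U_0(y-S),U_1(y-S-p_1')\}=U_0(y)$; if $p_1'\ge t_i$ (no attention), it solves $U_0(y-S)=U_0(y)$. Probabilities $\Pr$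 refer to population proportions under $G$. *)

theory Defs
  imports "HOL-Probability.Probability"
begin

text \<open>Population CDF of attention thresholds: consumers are the points of the
  probability space M, consumer i has threshold t i in (0, infinity] (an extended real).\<close>
definition cdfG :: "'a measure \<Rightarrow> ('a \<Rightarrow> ereal) \<Rightarrow> real \<Rightarrow> real" where
  "cdfG M t p = measure M {i \<in> space M. t i \<le> ereal p}"

definition q1 :: "(real \<Rightarrow> real) \<Rightarrow> (real \<Rightarrow> real) \<Rightarrow> (real \<Rightarrow> real) \<Rightarrow> real \<Rightarrow> real \<Rightarrow> real" where
  "q1 U0 U1 G p y = (if U0 y < U1 (y - p) then 1 else 0) * (1 - G p)"

text \<open>Left-hand side max{U0(y-S), U1(y-S-p1')} of the EV equation; the U1 term is only
  present where its argument lies in the domain [0,\<infinity>) of U1.\<close>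
definition ev_lhs :: "(real \<Rightarrow> real) \<Rightarrow> (real \<Rightarrow> real) \<Rightarrow> real \<Rightarrow> real \<Rightarrow> real \<Rightarrow> real" where
  "ev_lhs U0 U1 y p1' S =
     (if 0 \<le> y - S - p1' then max (U0 (y - S)) (U1 (y - S - p1')) else U0 (y - S))"

text \<open>Equivalent variation of a consumer with threshold ti for the price increase p1' to p1''
  (S ranges over values with y - S > 0, the domain of U0).\<close>
definition SEV :: "(real \<Rightarrow> real) \<Rightarrow> (real \<Rightarrow> real) \<Rightarrow> real \<Rightarrow> real \<Rightarrow> real \<Rightarrow> ereal \<Rightarrow> real" where
  "SEV U0 U1 y p1' p1'' ti =
     (if ereal p1'' < ti then
        (THE S. 0 < y - S \<and> ev_lhs U0 U1 y p1' S = max (U0 y) (U1 (y - p1'')))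
      else if ereal p1' < ti then
        (THE S. 0 < y - S \<and> ev_lhs U0 U1 y p1' S = U0 y)
      else
        (THE S. 0 < y - S \<and> U0 (y - S) = U0 y))"

definition pbar :: "(real \<Rightarrow> real) \<Rightarrow> (real \<Rightarrow> real) \<Rightarrow> (real \<Rightarrow> real) \<Rightarrow> real \<Rightarrow> real" where
  "pbar U0 U1 G y = (LEAST p. 0 \<le> p \<and> p \<le> y \<and> q1 U0 U1 G p y = 0)"

end

theory Submission
  imports Defs
begin

text \<open>Everything is governed by the reservation price r \<in> [0, y): the price with
  U1 (y - r) = U0 y, or r = 0 if good 1 is never preferred at the income y. An attentive consumer
  buys good 1 at price p exactly when p < r. The left-hand side of the EV equation is strictly
  decreasing in S, so the equivalent variation is p1'' - p1' for consumers still buying at p1'',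
  r - p1' for consumers switching to good 0, and 0 for everybody else. Under Assumption 3, q1
  vanishes on [0, y] exactly from r on, so pbar = r. Without it, q1 may also vanish earlier
  because of inattention, but the right-continuity of G still makes the minimum pbar exist, and
  it is at most r.\<close>

lemma U1_zero_less_U0:
  fixes U0 U1 :: "real \<Rightarrow> real"
  assumes U0: "strict_mono_on {0<..} U0" and U1: "strict_mono_on {0..} U1"
    and A1_ii: "\<forall>w>0. \<exists>pb\<in>{0..w}. U1 (w - pb) \<le> U0 w" and "0 < y"
  shows "U1 0 < U0 y"
proof -
  obtain pb where pb: "pb \<in> {0..y/2}" "U1 (y/2 - pb) \<le> U0 (y/2)"
    using A1_ii \<open>0 < y\<close> by (meson half_gt_zero)
  have "U1 0 \<le> U1 (y/2 - pb)"
    using pb by (intro strict_mono_on_leD[OF U1]) auto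
  also have "\<dots> \<le> U0 (y/2)" by (fact pb(2))
  also have "\<dots> < U0 y"
    using \<open>0 < y\<close> by (intro strict_mono_onD[OF U0]) auto
  finally show ?thesis .
qed

lemma reservation_price_exists:
  fixes U1 :: "real \<Rightarrow> real"
  assumes cont: "continuous_on {0..} U1" and mono: "strict_mono_on {0..} U1"
    and "U1 0 < c" and "0 < y"
  obtains r where "0 \<le> r" "r < y"
    and "\<And>p. 0 \<le> p \<Longrightarrow> p \<le> y \<Longrightarrow> c < U1 (y - p) \<longleftrightarrow> p < r"
    and "0 < r \<Longrightarrow> U1 (y - r) = c"
proof (cases "U1 y \<le> c")
  case True
  have "\<not> c < U1 (y - p)" if "0 \<le> p" "p \<le> y" for p
    using that True strict_mono_on_leD[OF mono, of "y - p" y] by auto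
  with \<open>0 < y\<close> show ?thesis by (intro that[of 0]) auto
next
  case False
  have "continuous_on {0..y} U1"
    using cont by (rule continuous_on_subset) auto
  then obtain x where x: "0 \<le> x" "x \<le> y" "U1 x = c"
    using IVT'[of U1 0 c y] \<open>U1 0 < c\<close> False \<open>0 < y\<close> by force
  with \<open>U1 0 < c\<close> have "0 < x" by (cases "x = 0") auto
  have "c < U1 (y - p) \<longleftrightarrow> p < y - x" if "0 \<le> p" "p \<le> y" for p
    using that x strict_mono_on_less[OF mono, of x "y - p"] by auto
  with x \<open>0 < x\<close> show ?thesis by (intro that[of "y - x"]) auto
qed

lemma ev_lhs_strict_antimono:
  fixes U0 U1 :: "real \<Rightarrow> real"
  assumes U0: "strict_mono_on {0<..} U0" and U1: "strict_mono_on {0..} U1"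
    and "S1 < S2" "S2 < y"
  shows "ev_lhs U0 U1 y p S2 < ev_lhs U0 U1 y p S1"
proof -
  have U0_less: "U0 (y - S2) < U0 (y - S1)"
    using assms(3,4) by (intro strict_mono_onD[OF U0]) auto
  show ?thesis
  proof (cases "0 \<le> y - S2 - p")
    case True
    then have "U1 (y - S2 - p) < U1 (y - S1 - p)"
      using assms(3) by (intro strict_mono_onD[OF U1]) auto
    with True U0_less \<open>S1 < S2\<close> show ?thesis
      unfolding ev_lhs_def by (auto simp: max_def)
  next
    case False
    with U0_less show ?thesis
      unfolding ev_lhs_def by (auto simp: max_def)
  qed
qed

lemma the_ev_lhs_eqI:
  fixes U0 U1 :: "real \<Rightarrow> real"
  assumes "strict_mono_on {0<..} U0" "strict_mono_on {0..} U1"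
    and "S < y" "ev_lhs U0 U1 y p S = c"
  shows "(THE S. 0 < y - S \<and> ev_lhs U0 U1 y p S = c) = S"
proof (rule the_equality)
  fix S' assume S': "0 < y - S' \<and> ev_lhs U0 U1 y p S' = c"
  show "S' = S"
    using ev_lhs_strict_antimono[OF assms(1,2), of S' S y p]
      ev_lhs_strict_antimono[OF assms(1,2), of S S' y p] S' assms(3,4)
    by (cases S' S rule: linorder_cases) auto
qed (use assms in auto)

lemma the_U0_eq:
  fixes U0 :: "real \<Rightarrow> real"
  assumes "strict_mono_on {0<..} U0" and "0 < y"
  shows "(THE S. 0 < y - S \<and> U0 (y - S) = U0 y) = 0"
proof (rule the_equality)
  fix S assume "0 < y - S \<and> U0 (y - S) = U0 y"
  with \<open>0 < y\<close> inj_onD[OF strict_mono_on_imp_inj_on[OF assms(1)], of "y - S" y]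
  show "S = 0" by auto
qed (use assms in auto)

lemma the_ev_lhs_eq_U0:
  fixes U0 U1 :: "real \<Rightarrow> real"
  assumes U0: "strict_mono_on {0<..} U0" and U1: "strict_mono_on {0..} U1"
    and "0 \<le> p" "p \<le> y" and "0 \<le> r" "r < y"
    and buys: "U0 y < U1 (y - p) \<longleftrightarrow> p < r" and r_eq: "0 < r \<Longrightarrow> U1 (y - r) = U0 y"
  shows "(THE S. 0 < y - S \<and> ev_lhs U0 U1 y p S = U0 y) = (if p < r then r - p else 0)"
proof (cases "p < r")
  case True
  have "U0 (y - (r - p)) < U0 y"
    using True \<open>0 \<le> p\<close> \<open>r < y\<close> by (intro strict_mono_onD[OF U0]) auto
  then have "ev_lhs U0 U1 y p (r - p) = U0 y"
    using True \<open>0 \<le> p\<close> \<open>r < y\<close> r_eq unfolding ev_lhs_def by (auto simp: max_def)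
  with True \<open>0 \<le> p\<close> \<open>r < y\<close> show ?thesis
    using the_ev_lhs_eqI[OF U0 U1] by auto
next
  case False
  then have "ev_lhs U0 U1 y p 0 = U0 y"
    using buys \<open>p \<le> y\<close> unfolding ev_lhs_def by auto
  with False \<open>0 \<le> r\<close> \<open>r < y\<close> show ?thesis
    using the_ev_lhs_eqI[OF U0 U1] by auto
qed

lemma SEV_eq_reservation:
  fixes U0 U1 :: "real \<Rightarrow> real"
  assumes U0: "strict_mono_on {0<..} U0" and U1: "strict_mono_on {0..} U1"
    and prices: "0 \<le> p1'" "p1' < p1''" "p1'' \<le> y"
    and "0 \<le> r" "r < y"
    and buys: "\<And>p. 0 \<le> p \<Longrightarrow> p \<le> y \<Longrightarrow> U0 y < U1 (y - p) \<longleftrightarrow> p < r"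
    and r_eq: "0 < r \<Longrightarrow> U1 (y - r) = U0 y"
  shows "SEV U0 U1 y p1' p1'' ti =
    (if ereal p1'' < ti \<and> p1'' < r then p1'' - p1'
     else if ereal p1' < ti \<and> p1' < r then r - p1' else 0)"
proof -
  have partial: "(THE S. 0 < y - S \<and> ev_lhs U0 U1 y p1' S = U0 y) = (if p1' < r then r - p1' else 0)"
    using prices \<open>0 \<le> r\<close> \<open>r < y\<close> buys r_eq by (intro the_ev_lhs_eq_U0[OF U0 U1]) auto
  have attentive: "ereal p1' < ti" if "ereal p1'' < ti"
    using that prices(2) by (meson ereal_less_eq(3) less_imp_le order_le_less_trans)
  consider "ereal p1'' < ti" "p1'' < r" | "ereal p1'' < ti" "\<not> p1'' < r"
    | "\<not> ereal p1'' < ti" "ereal p1' < ti" | "\<not> ereal p1' < ti"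
    using attentive by blast
  then show ?thesis
  proof cases
    case 1
    have "U0 y < U1 (y - p1'')" using 1 buys prices by auto
    moreover have "U0 (y - (p1'' - p1')) < U0 y"
      using prices 1 \<open>r < y\<close> by (intro strict_mono_onD[OF U0]) auto
    ultimately have "ev_lhs U0 U1 y p1' (p1'' - p1') = max (U0 y) (U1 (y - p1''))"
      using prices unfolding ev_lhs_def by (auto simp: max_def)
    then have "(THE S. 0 < y - S \<and> ev_lhs U0 U1 y p1' S = max (U0 y) (U1 (y - p1''))) = p1'' - p1'"
      using prices 1 \<open>r < y\<close> by (intro the_ev_lhs_eqI[OF U0 U1]) auto
    with 1 show ?thesis unfolding SEV_def by simp
  next
    case 2
    then have "\<not> U0 y < U1 (y - p1'')" using buys[of p1''] prices by auto
    then have "max (U0 y) (U1 (y - p1'')) = U0 y" by simp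
    with 2 partial attentive show ?thesis unfolding SEV_def by simp
  next
    case 3
    with partial show ?thesis unfolding SEV_def by simp
  next
    case 4
    with attentive the_U0_eq[OF U0] prices show ?thesis unfolding SEV_def by auto
  qed
qed

lemma measure_threshold_greater:
  assumes "prob_space M" "t \<in> borel_measurable M"
  shows "measure M {i \<in> space M. ereal p < t i} = 1 - cdfG M t p"
proof -
  interpret prob_space M by fact
  have "{i \<in> space M. ereal p < t i} = space M - {i \<in> space M. t i \<le> ereal p}" by auto
  moreover have "{i \<in> space M. t i \<le> ereal p} \<in> sets M" using assms(2) by measurable
  ultimately show ?thesis by (simp add: prob_compl cdfG_def)
qed

lemma mono_cdfG:
  assumes "prob_space M" "t \<in> borel_measurable M"
  shows "mono (cdfG M t)"
proof (rule monoI)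
  interpret prob_space M by fact
  fix p q :: real assume "p \<le> q"
  then show "cdfG M t p \<le> cdfG M t q" unfolding cdfG_def
    using assms(2) by (intro finite_measure_mono) (auto intro: order_trans)
qed

lemma cdfG_le_1: "prob_space M \<Longrightarrow> cdfG M t p \<le> 1"
  unfolding cdfG_def by (rule prob_space.prob_le_1)

lemma cdfG_eq_1_from_right:
  assumes "prob_space M" "t \<in> borel_measurable M"
    and ones: "\<And>p. m < p \<Longrightarrow> cdfG M t p = 1"
  shows "cdfG M t m = 1"
proof -
  interpret prob_space M by fact
  define A where "A n = {i \<in> space M. t i \<le> ereal (m + inverse (Suc n))}" for n :: nat
  have "A n \<in> sets M" for n unfolding A_def using assms(2) by measurable
  then have "range A \<subseteq> sets M" by blast
  moreover have "decseq A"
    unfolding A_def decseq_def by (auto simp: field_simps intro: order_trans)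
  ultimately have "(\<lambda>n. measure M (A n)) \<longlonglongrightarrow> measure M (\<Inter>n. A n)"
    by (rule finite_Lim_measure_decseq)
  moreover have "(\<Inter>n. A n) = {i \<in> space M. t i \<le> ereal m}"
  proof (intro equalityI subsetI)
    fix i assume "i \<in> (\<Inter>n. A n)"
    then have "i \<in> space M" "\<forall>n\<ge>0. t i \<le> ereal (m + inverse (Suc n))"
      by (auto simp: A_def)
    moreover have "(\<lambda>n. ereal (m + inverse (Suc n))) \<longlonglongrightarrow> ereal m"
      using LIMSEQ_inverse_real_of_nat_add by (rule tendsto_ereal)
    ultimately show "i \<in> {i \<in> space M. t i \<le> ereal m}"
      using Lim_bounded2 by blast
  qed (auto simp: A_def intro: order_trans)
  moreover have "measure M (A n) = 1" for n
    using ones[of "m + inverse (Suc n)"] by (simp add: A_def cdfG_def)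
  ultimately show ?thesis
    by (simp add: cdfG_def LIMSEQ_const_iff)
qed

lemma pbar_le_reservation:
  fixes G :: "real \<Rightarrow> real"
  assumes "mono G" "\<And>p. G p \<le> 1"
    and right_closed: "\<And>m. (\<And>p. m < p \<Longrightarrow> G p = 1) \<Longrightarrow> G m = 1"
    and "0 \<le> r" "r \<le> y"
    and buys: "\<And>p. 0 \<le> p \<Longrightarrow> p \<le> y \<Longrightarrow> U0 y < U1 (y - p) \<longleftrightarrow> p < r"
  shows "pbar U0 U1 G y \<le> r"
proof -
  define Q where "Q p \<longleftrightarrow> 0 \<le> p \<and> p \<le> y \<and> q1 U0 U1 G p y = 0" for p
  have Q_iff: "Q p \<longleftrightarrow> 0 \<le> p \<and> p \<le> y \<and> (r \<le> p \<or> G p = 1)" for p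
    using buys[of p] by (auto simp: Q_def q1_def)
  define m where "m = Inf (Collect Q)"
  have "Q r" using Q_iff assms by auto
  have bdd: "bdd_below (Collect Q)" by (auto simp: Q_iff bdd_below_def)
  have m_le: "m \<le> p" if "Q p" for p unfolding m_def using bdd that by (simp add: cInf_lower)
  have "0 \<le> m" unfolding m_def using \<open>Q r\<close> by (intro cInf_greatest) (auto simp: Q_iff)
  have "Q m"
  proof (cases "m < r")
    case True
    have "G p = 1" if "m < p" for p
    proof -
      obtain q where "Q q" "q < min p r"
        using cInf_less_iff[of "Collect Q" "min p r"] \<open>Q r\<close> bdd \<open>m < p\<close> True
        by (auto simp: m_def)
      then have "G q = 1" using Q_iff by auto
      then show ?thesis
        using monoD[OF \<open>mono G\<close>, of q p] \<open>q < min p r\<close> \<open>G p \<le> 1\<close> by auto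
    qed
    then show ?thesis
      using right_closed \<open>0 \<le> m\<close> m_le[OF \<open>Q r\<close>] \<open>r \<le> y\<close> by (auto simp: Q_iff)
  next
    case False
    then show ?thesis using m_le[OF \<open>Q r\<close>] \<open>Q r\<close> by auto
  qed
  have "pbar U0 U1 G y = (LEAST p. Q p)" by (simp add: pbar_def Q_def)
  also have "\<dots> = m" using \<open>Q m\<close> m_le by (intro Least_equality) auto
  finally show ?thesis using m_le[OF \<open>Q r\<close>] by simp
qed

lemma pbar_eq_reservation:
  fixes G :: "real \<Rightarrow> real"
  assumes never_all: "\<And>p. G p < 1" and "0 \<le> r" "r \<le> y"
    and buys: "\<And>p. 0 \<le> p \<Longrightarrow> p \<le> y \<Longrightarrow> U0 y < U1 (y - p) \<longleftrightarrow> p < r"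
  shows "pbar U0 U1 G y = r"
  unfolding pbar_def
proof (rule Least_equality)
  show "0 \<le> r \<and> r \<le> y \<and> q1 U0 U1 G r y = 0"
    using buys[of r] assms by (simp add: q1_def)
next
  fix p assume "0 \<le> p \<and> p \<le> y \<and> q1 U0 U1 G p y = 0"
  then show "r \<le> p"
    using buys[of p] never_all[of p] by (auto simp: q1_def)
qed

lemma measure_level_set_nested:
  assumes "finite_measure M" "A \<in> sets M" "B \<in> sets M" "B \<subseteq> A"
    and f: "\<And>i. i \<in> space M \<Longrightarrow> f i = (if i \<in> B then b else if i \<in> A then a else z)"
  shows "measure M {i \<in> space M. f i = v} =
      (if v = z then measure M (space M - A) else 0)
    + (if v = a then measure M (A - B) else 0)
    + (if v = b then measure M B else 0)"
proof -
  interpret finite_measure M by fact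
  let ?Z = "if v = z then space M - A else {}"
  let ?A = "if v = a then A - B else {}"
  let ?B = "if v = b then B else {}"
  have "{i \<in> space M. f i = v} =
      {i \<in> space M. (if i \<in> B then b else if i \<in> A then a else z) = v}"
    using f by auto
  also have "\<dots> = (?Z \<union> ?A) \<union> ?B"
    using sets.sets_into_space[OF assms(2)] assms(4) by auto
  finally have "measure M {i \<in> space M. f i = v} = measure M ((?Z \<union> ?A) \<union> ?B)"
    by simp
  also have "\<dots> = measure M (?Z \<union> ?A) + measure M ?B"
    by (rule finite_measure_Union) (use assms(2-4) in auto)
  also have "measure M (?Z \<union> ?A) = measure M ?Z + measure M ?A"
    by (rule finite_measure_Union) (use assms(2-4) in auto)
  finally show ?thesis by simp
qed

definition buyers :: "'a measure \<Rightarrow> ('a \<Rightarrow> ereal) \<Rightarrow> real \<Rightarrow> real \<Rightarrow> 'a set" where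
  "buyers M t r p = {i \<in> space M. ereal p < t i \<and> p < r}"

lemma buyers_sets: "t \<in> borel_measurable M \<Longrightarrow> buyers M t r p \<in> sets M"
  unfolding buyers_def by measurable

lemma buyers_antimono: "p \<le> q \<Longrightarrow> buyers M t r q \<subseteq> buyers M t r p"
  unfolding buyers_def by (auto intro: order.strict_trans1[of "ereal p" "ereal q"])

lemma measure_buyers:
  assumes "prob_space M" "t \<in> borel_measurable M"
    and "0 \<le> p" "p \<le> y" and "U0 y < U1 (y - p) \<longleftrightarrow> p < r"
  shows "measure M (buyers M t r p) = q1 U0 U1 (cdfG M t) p y"
  using assms measure_threshold_greater[OF assms(1,2), of p]
  by (simp add: buyers_def q1_def)

lemma measure_SEV_eq:
  fixes U0 U1 :: "real \<Rightarrow> real"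
  assumes prob: "prob_space M" and t_meas: "t \<in> borel_measurable M"
    and U0: "strict_mono_on {0<..} U0" and U1: "strict_mono_on {0..} U1"
    and prices: "0 \<le> p1'" "p1' < p1''" "p1'' \<le> y"
    and r: "0 \<le> r" "r < y"
    and buys: "\<And>p. 0 \<le> p \<Longrightarrow> p \<le> y \<Longrightarrow> U0 y < U1 (y - p) \<longleftrightarrow> p < r"
    and r_eq: "0 < r \<Longrightarrow> U1 (y - r) = U0 y"
  shows "measure M {i \<in> space M. SEV U0 U1 y p1' p1'' (t i) = v} =
      (if v = 0 then 1 - q1 U0 U1 (cdfG M t) p1' y else 0)
    + (if v = r - p1' then q1 U0 U1 (cdfG M t) p1' y - q1 U0 U1 (cdfG M t) p1'' y else 0)
    + (if v = p1'' - p1' then q1 U0 U1 (cdfG M t) p1'' y else 0)"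
proof -
  interpret prob_space M by fact
  let ?A = "buyers M t r p1'" and ?B = "buyers M t r p1''"
  have sets: "?A \<in> sets M" "?B \<in> sets M" using t_meas by (auto intro: buyers_sets)
  have "?B \<subseteq> ?A" using prices by (intro buyers_antimono) simp
  have qA: "measure M ?A = q1 U0 U1 (cdfG M t) p1' y"
    and qB: "measure M ?B = q1 U0 U1 (cdfG M t) p1'' y"
    using prices by (auto intro!: measure_buyers[OF prob t_meas] buys)
  have "SEV U0 U1 y p1' p1'' (t i) = (if i \<in> ?B then p1'' - p1' else if i \<in> ?A then r - p1' else 0)"
    if "i \<in> space M" for i
    using SEV_eq_reservation[OF U0 U1 prices r buys r_eq] that by (simp add: buyers_def)
  then have "measure M {i \<in> space M. SEV U0 U1 y p1' p1'' (t i) = v} =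
      (if v = 0 then measure M (space M - ?A) else 0)
    + (if v = r - p1' then measure M (?A - ?B) else 0)
    + (if v = p1'' - p1' then measure M ?B else 0)"
    by (intro measure_level_set_nested[OF _ sets \<open>?B \<subseteq> ?A\<close>]) (simp add: finite_measure_axioms)
  also have "\<dots> =
      (if v = 0 then 1 - q1 U0 U1 (cdfG M t) p1' y else 0)
    + (if v = r - p1' then q1 U0 U1 (cdfG M t) p1' y - q1 U0 U1 (cdfG M t) p1'' y else 0)
    + (if v = p1'' - p1' then q1 U0 U1 (cdfG M t) p1'' y else 0)"
    by (simp only: prob_compl[OF sets(1)] finite_measure_Diff[OF sets \<open>?B \<subseteq> ?A\<close>] qA qB)
  finally show ?thesis .
qed

lemma measure_switchers:
  fixes U0 U1 :: "real \<Rightarrow> real"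
  assumes prob: "prob_space M" and t_meas: "t \<in> borel_measurable M"
    and prices: "0 \<le> p1'" "p1' < p1''" "p1'' \<le> y"
    and buys: "\<And>p. 0 \<le> p \<Longrightarrow> p \<le> y \<Longrightarrow> U0 y < U1 (y - p) \<longleftrightarrow> p < r"
  shows "measure M {i \<in> space M. (ereal p1' < t i \<and> U0 y < U1 (y - p1'))
      \<and> \<not> (ereal p1'' < t i \<and> U0 y < U1 (y - p1''))}
    = q1 U0 U1 (cdfG M t) p1' y - q1 U0 U1 (cdfG M t) p1'' y"
proof -
  interpret prob_space M by fact
  let ?A = "buyers M t r p1'" and ?B = "buyers M t r p1''"
  have switchers: "{i \<in> space M. (ereal p1' < t i \<and> U0 y < U1 (y - p1'))
      \<and> \<not> (ereal p1'' < t i \<and> U0 y < U1 (y - p1''))} = ?A - ?B"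
    using buys[of p1'] buys[of p1''] prices by (auto simp: buyers_def)
  have "?B \<subseteq> ?A" using prices by (intro buyers_antimono) simp
  have qA: "measure M ?A = q1 U0 U1 (cdfG M t) p1' y"
    and qB: "measure M ?B = q1 U0 U1 (cdfG M t) p1'' y"
    using prices by (auto intro!: measure_buyers[OF prob t_meas] buys)
  show ?thesis
    unfolding switchers finite_measure_Diff[OF buyers_sets[OF t_meas] buyers_sets[OF t_meas] \<open>?B \<subseteq> ?A\<close>]
      qA qB ..
qed

theorem theorem2:
  fixes M :: "'a measure" and t :: "'a \<Rightarrow> ereal"
    and U0 U1 :: "real \<Rightarrow> real" and y p1' p1'' :: real
  assumes prob: "prob_space M"
    and t_meas: "t \<in> borel_measurable M"
    and t_pos: "\<forall>i\<in>space M. 0 < t i"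
    and y_pos: "0 < y"
    and prices: "0 \<le> p1'" "p1' < p1''" "p1'' \<le> y"
    and U0_range: "\<forall>z>0. 0 \<le> U0 z"
    and U1_range: "\<forall>z\<ge>0. 0 \<le> U1 z"
    and A1_U0: "strict_mono_on {0<..} U0"
    and A1_U1_cont: "continuous_on {0..} U1"
    and A1_U1_mono: "strict_mono_on {0..} U1"
    and A1_ii: "\<forall>w>0. \<exists>pb\<in>{0..w}. U1 (w - pb) \<le> U0 w"
    and A2: "cdfG M t 0 = 0"
  shows "((\<forall>p. cdfG M t p < 1) \<longrightarrow>
           (\<forall>v. measure M {i \<in> space M. SEV U0 U1 y p1' p1'' (t i) = v} =
                  (if v = 0 then 1 - q1 U0 U1 (cdfG M t) p1' y else 0)
                + (if v = pbar U0 U1 (cdfG M t) y - p1'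
                   then q1 U0 U1 (cdfG M t) p1' y - q1 U0 U1 (cdfG M t) p1'' y else 0)
                + (if v = p1'' - p1' then q1 U0 U1 (cdfG M t) p1'' y else 0)))
       \<and> (measure M {i \<in> space M. (ereal p1' < t i \<and> U0 y < U1 (y - p1'))
                   \<and> \<not> (ereal p1'' < t i \<and> U0 y < U1 (y - p1''))}
           = q1 U0 U1 (cdfG M t) p1' y - q1 U0 U1 (cdfG M t) p1'' y
         \<and> (\<forall>i\<in>space M. (ereal p1' < t i \<and> U0 y < U1 (y - p1'))
                   \<and> \<not> (ereal p1'' < t i \<and> U0 y < U1 (y - p1'')) \<longrightarrow>
              SEV U0 U1 y p1' p1'' (t i) \<le> y - p1'
              \<and> pbar U0 U1 (cdfG M t) y - p1' \<le> SEV U0 U1 y p1' p1'' (t i)))"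
proof -
  obtain r where r: "0 \<le> r" "r < y"
    and buys: "\<And>p. 0 \<le> p \<Longrightarrow> p \<le> y \<Longrightarrow> U0 y < U1 (y - p) \<longleftrightarrow> p < r"
    and r_eq: "0 < r \<Longrightarrow> U1 (y - r) = U0 y"
    using reservation_price_exists[OF A1_U1_cont A1_U1_mono _ y_pos]
      U1_zero_less_U0[OF A1_U0 A1_U1_mono A1_ii y_pos] by metis
  have "pbar U0 U1 (cdfG M t) y = r" if "\<forall>p. cdfG M t p < 1"
    using that r buys by (intro pbar_eq_reservation) auto
  moreover have "pbar U0 U1 (cdfG M t) y \<le> r"
    using mono_cdfG[OF prob t_meas] cdfG_le_1[OF prob] cdfG_eq_1_from_right[OF prob t_meas] r buys
    by (intro pbar_le_reservation) auto
  moreover have "SEV U0 U1 y p1' p1'' (t i) = r - p1'"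
    if "(ereal p1' < t i \<and> U0 y < U1 (y - p1')) \<and> \<not> (ereal p1'' < t i \<and> U0 y < U1 (y - p1''))" for i
    using that SEV_eq_reservation[OF A1_U0 A1_U1_mono prices r buys r_eq] buys[of p1'] buys[of p1''] prices
    by auto
  ultimately show ?thesis
    using measure_SEV_eq[OF prob t_meas A1_U0 A1_U1_mono prices r buys r_eq]
      measure_switchers[where ?U0.0 = U0 and ?U1.0 = U1 and r = r, OF prob t_meas prices buys] \<open>r < y\<close>
    by auto
qed

end
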